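(* Let $u=\bar u$ with $\bar u$ a constant vector, and assume $(\bar\eta,\bar\omega_G)$ with $\bar\eta\in\Omega\cap\operatorname{im}B^T$ is an equilibrium of $\dot\eta=B_S^T(\eta)\omega_G$, $M\dot\omega_G=-A\omega_G-B_G\Gamma\sin(\eta)+u$. Then solutions $(\eta,\omega_G)$ of this system with $B_L\Gamma\sin(\eta(0))=B_L\Gamma\sin(\bar\eta)$ locally converge to $(\bar\eta,\bar\omega_G)$.
   Context: A connected undirected graph with $n$ nodes and $m$ edges, nodes partitioned into $n_g$ generator and $n_\ell$ load nodes; $B$ is an incidence matrix partitioned row-wise as $B=\begin{bmatrix}B_G^T & B_L^T\end{bmatrix}^T$. $\Gamma=\mathrm{diag}(\gamma_k)$ is positive definite, $M,A$ positive definite diagonal. $\sin,\cos$ act elementwise, $\Omega=(-\frac{\pi}{2},\frac{\pi}{2})^m$, $\Gamma'(\eta)=\Gamma\,\mathrm{diag}(\cos(\eta_k))$, $B_S(\eta)=B_G\big(I-\Gamma'(\eta)B_L^T(B_L\Gamma'(\eta)B_L^T)^{-1}B_L\big)$. State space: $(\eta,\omega_G)\in\operatorname{im}B^T\times\mathbb{R}^{n_g}$. *)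

theory Defs
  imports "HOL-Analysis.Analysis"
begin

definition diagm :: "real^'n \<Rightarrow> real^'n^'n" where
  "diagm v = (\<chi> i j. if i = j then v $ i else 0)"

definition vsin :: "real^'e \<Rightarrow> real^'e" where
  "vsin x = (\<chi> k. sin (x $ k))"

definition vcos :: "real^'e \<Rightarrow> real^'e" where
  "vcos x = (\<chi> k. cos (x $ k))"

definition incidence_matrix :: "real^'e^'n \<Rightarrow> bool" where
  "incidence_matrix B \<longleftrightarrow> (\<forall>j. \<exists>a b. a \<noteq> b \<and> B $ a $ j = 1 \<and> B $ b $ j = -1
        \<and> (\<forall>c. c \<noteq> a \<and> c \<noteq> b \<longrightarrow> B $ c $ j = 0))"

definition adj_of :: "real^'e^'n \<Rightarrow> ('n \<times> 'n) set" where
  "adj_of B = {(a, b). a \<noteq> b \<and> (\<exists>j. B $ a $ j \<noteq> 0 \<and> B $ b $ j \<noteq> 0)}"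

definition connected_incidence :: "real^'e^'n \<Rightarrow> bool" where
  "connected_incidence B \<longleftrightarrow> (\<forall>x y. (x, y) \<in> (adj_of B)\<^sup>*)"

text \<open>Generator rows (Inl) and load rows (Inr) of B.\<close>
definition BG :: "real^'e^('g::finite + 'l::finite) \<Rightarrow> real^'e^'g" where
  "BG B = (\<chi> i j. B $ Inl i $ j)"

definition BL :: "real^'e^('g::finite + 'l::finite) \<Rightarrow> real^'e^'l" where
  "BL B = (\<chi> i j. B $ Inr i $ j)"

definition Omega :: "(real^'e) set" where
  "Omega = {x. \<forall>k. \<bar>x $ k\<bar> < pi / 2}"

definition Gammap :: "real^'e \<Rightarrow> real^'e \<Rightarrow> real^'e^'e" where
  "Gammap gam \<eta> = diagm gam ** diagm (vcos \<eta>)"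

definition BS :: "real^'e^('g::finite + 'l::finite) \<Rightarrow> real^'e \<Rightarrow> real^'e \<Rightarrow> real^'e^'g" where
  "BS B gam \<eta> = BG B ** (mat 1 - Gammap gam \<eta> ** transpose (BL B)
      ** matrix_inv (BL B ** Gammap gam \<eta> ** transpose (BL B)) ** BL B)"

definition imBT :: "real^'e^'n \<Rightarrow> (real^'e) set" where
  "imBT B = range (\<lambda>x. transpose B *v x)"

text \<open>A solution on [0,inf) of
  eta' = B_S(eta)^T omega_G,  M omega_G' = -A omega_G - B_G Gamma sin(eta) + u,
  whose eta-component stays in Omega (where the vector field is defined).\<close>
definition is_solution ::
  "real^'e^('g::finite + 'l::finite) \<Rightarrow> real^'e \<Rightarrow> real^'g \<Rightarrow> real^'g \<Rightarrow> real^'g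
     \<Rightarrow> (real \<Rightarrow> real^'e) \<Rightarrow> (real \<Rightarrow> real^'g) \<Rightarrow> bool" where
  "is_solution B gam Mv Av u \<eta> \<omega> \<longleftrightarrow>
     (\<forall>t\<ge>0. \<eta> t \<in> Omega \<and>
        (\<eta> has_vector_derivative (transpose (BS B gam (\<eta> t)) *v \<omega> t)) (at t within {0..}) \<and>
        (\<exists>w'. (\<omega> has_vector_derivative w') (at t within {0..}) \<and>
              diagm Mv *v w' = - (diagm Av *v \<omega> t) - (BG B ** diagm gam) *v vsin (\<eta> t) + u))"

definition is_equilibrium ::
  "real^'e^('g::finite + 'l::finite) \<Rightarrow> real^'e \<Rightarrow> real^'g \<Rightarrow> real^'g \<Rightarrow> real^'g \<Rightarrow> real^'e \<Rightarrow> real^'g \<Rightarrow> bool" where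
  "is_equilibrium B gam Mv Av u \<eta>b \<omega>b \<longleftrightarrow>
     transpose (BS B gam \<eta>b) *v \<omega>b = 0 \<and>
     - (diagm Av *v \<omega>b) - (BG B ** diagm gam) *v vsin \<eta>b + u = 0"

end

theory Submission
  imports Defs
begin

text \<open>
  With \<open>s = sin \<eta> - sin \<eta>b\<close>, the function
  \<open>V = \<Sum>\<^sub>i M\<^sub>i/2 (\<omega>\<^sub>i - \<omega>b\<^sub>i)\<^sup>2 + \<Sum>\<^sub>k \<gamma>\<^sub>k (cos \<eta>b\<^sub>k - cos \<eta>\<^sub>k - sin \<eta>b\<^sub>k (\<eta>\<^sub>k - \<eta>b\<^sub>k))\<close>
  decreases along solutions with \<open>V' = -(\<omega> - \<omega>b)\<^sup>T A (\<omega> - \<omega>b)\<close>. Two structural facts make this work: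
  \<open>B\<^sub>L \<Gamma>'(\<eta>) B\<^sub>S(\<eta>)\<^sup>T = 0\<close>, so \<open>B\<^sub>L \<Gamma> sin \<eta>\<close> is a conserved quantity and \<open>B\<^sub>L \<Gamma> s = 0\<close>,
  on which \<open>B\<^sub>S(\<eta>)\<close> acts as \<open>B\<^sub>G\<close>; and the equilibrium condition \<open>B\<^sub>S(\<eta>b)\<^sup>T \<omega>b = 0\<close>
  forces \<open>\<omega>b\<close> to be synchronous, hence orthogonal to \<open>B\<^sub>G \<Gamma> s\<close>.
  Starting in a small sublevel set of \<open>V\<close>, every \<open>\<eta>\<^sub>k\<close> stays in a compact
  subinterval of \<open>(-\<pi>/2, \<pi>/2)\<close>, all rates are bounded, and a Barbalat-type argument
  gives \<open>\<omega> \<rightarrow> \<omega>b\<close>, then \<open>B\<^sub>G \<Gamma> s \<rightarrow> 0\<close> from the \<open>\<omega>\<close>-equation. Finally \<open>\<eta> - \<eta>b\<close>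
  stays orthogonal to \<open>ker B\<^sub>G \<inter> ker B\<^sub>L\<close> (it starts in \<open>im B\<^sup>T\<close>, and \<open>B\<^sub>S(\<eta>)\<close> acts as
  \<open>B\<^sub>G\<close> on that kernel), so
  \<open>(B\<^sub>G, B\<^sub>L)\<close> is coercive on the relevant part of \<open>\<Gamma> s\<close>, and strong monotonicity of
  \<open>sin\<close> on that interval gives \<open>\<eta> \<rightarrow> \<eta>b\<close>.
\<close>

lemma diagm_mult_vec: "diagm v *v x = (\<chi> i. v$i * x$i)"
proof -
  have "(\<Sum>j\<in>UNIV. (if i = j then v$i else 0) * x$j) = v$i * x$i" for i
  proof -
    have "(\<Sum>j\<in>UNIV. (if i = j then v$i else 0) * x$j) = (\<Sum>j\<in>UNIV. if i = j then v$i * x$j else 0)"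
      by (rule sum.cong) auto
    then show ?thesis by simp
  qed
  then show ?thesis by (simp add: diagm_def matrix_vector_mult_def vec_eq_iff)
qed

lemma diagm_mult_vec_nth: "(diagm v *v x) $ i = v$i * x$i"
  by (simp add: diagm_mult_vec)

lemma transpose_diagm: "transpose (diagm v) = diagm v"
  by (simp add: diagm_def transpose_def vec_eq_iff)

lemma diagm_mult_diagm: "diagm a ** diagm b = diagm (\<chi> i. a$i * b$i)"
proof -
  have "(\<Sum>k\<in>UNIV. (if i = k then a$i else 0) * (if k = j then b$k else 0))
        = (if i = j then a$i * b$i else 0)" for i j
  proof -
    have "(\<Sum>k\<in>UNIV. (if i = k then a$i else 0) * (if k = j then b$k else 0))
          = (\<Sum>k\<in>UNIV. if k = i then (if i = j then a$i * b$i else 0) else 0)"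
      by (rule sum.cong) auto
    then show ?thesis by simp
  qed
  then show ?thesis by (simp add: diagm_def matrix_matrix_mult_def vec_eq_iff)
qed

lemma inner_diagm: "x \<bullet> (diagm v *v y) = (\<Sum>i\<in>UNIV. v$i * x$i * y$i)"
  by (simp add: inner_vec_def diagm_mult_vec_nth mult_ac)

lemma inner_diagm_commute: "x \<bullet> (diagm v *v y) = y \<bullet> (diagm v *v x)"
  by (simp add: inner_diagm mult_ac)

lemma norm_power2_cart: "(norm (x::real^'n))^2 = (\<Sum>i\<in>UNIV. x$i * x$i)"
  by (simp add: power2_norm_eq_inner inner_vec_def)

lemma inner_diagm_self_ge:
  assumes "\<And>k. m \<le> v$k" "m \<ge> 0"
  shows "m * (norm x)^2 \<le> x \<bullet> (diagm v *v x)"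
proof -
  have "m * (norm x)^2 = (\<Sum>i\<in>UNIV. m * x$i * x$i)"
    by (simp add: norm_power2_cart sum_distrib_left mult.assoc)
  also have "\<dots> \<le> (\<Sum>i\<in>UNIV. v$i * x$i * x$i)"
    by (intro sum_mono) (metis assms(1) mult.assoc mult_right_mono zero_le_square)
  finally show ?thesis by (simp add: inner_diagm)
qed

lemma inner_diagm_self_nonneg: "(\<And>k. v$k \<ge> 0) \<Longrightarrow> x \<bullet> (diagm v *v x) \<ge> 0"
  using inner_diagm_self_ge[of 0 v x] by simp

lemma inner_diagm_self_le:
  assumes "\<And>k. v$k \<le> m"
  shows "x \<bullet> (diagm v *v x) \<le> m * (norm x)^2"
proof -
  have "x \<bullet> (diagm v *v x) = (\<Sum>i\<in>UNIV. v$i * x$i * x$i)" by (simp add: inner_diagm)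
  also have "\<dots> \<le> (\<Sum>i\<in>UNIV. m * x$i * x$i)"
    by (intro sum_mono) (metis assms(1) mult.assoc mult_right_mono zero_le_square)
  also have "\<dots> = m * (norm x)^2" by (simp add: norm_power2_cart sum_distrib_left mult.assoc)
  finally show ?thesis .
qed

lemma transpose_diff: "transpose (A - (C::real^'n^'m)) = transpose A - transpose C"
  by (simp add: transpose_def vec_eq_iff)

lemma inner_matrix_vector_mult: "x \<bullet> (A *v y) = (transpose A *v x) \<bullet> (y::real^'n)"
  by (metis dot_lmul_matrix transpose_matrix_vector)

lemma matrix_vector_mult_bounded: "\<exists>K>0. \<forall>x. norm ((A::real^'n^'m) *v x) \<le> K * norm x"
  using bounded_linear.pos_bounded[OF matrix_vector_mul_bounded_linear[of A]]
  by (auto simp: mult.commute)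

lemma matrix_inv_mult:
  assumes "invertible A"
  shows "A ** matrix_inv A = mat 1" "matrix_inv A ** A = mat 1"
  using someI_ex[OF assms[unfolded invertible_def]] by (simp_all add: matrix_inv_def)

lemma transpose_matrix_inv_symmetric:
  fixes Y :: "real^'n^'n"
  assumes "invertible Y" "transpose Y = Y"
  shows "transpose (matrix_inv Y) = matrix_inv Y"
proof -
  let ?X = "matrix_inv Y"
  have "transpose ?X ** Y = mat 1"
    by (metis assms(2) matrix_transpose_mul transpose_mat matrix_inv_mult(1)[OF assms(1)])
  then have "transpose ?X = transpose ?X ** (Y ** ?X)"
    using matrix_inv_mult(1)[OF assms(1)] by simp
  also have "\<dots> = ?X" by (simp add: matrix_mul_assoc \<open>transpose ?X ** Y = mat 1\<close>)
  finally show ?thesis .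
qed

section \<open>Incidence matrices of connected graphs\<close>

lemma incidence_column_sum:
  fixes B :: "real^'e^'n" and y :: "real^'n"
  assumes "a \<noteq> b" "B$a$j = 1" "B$b$j = -1" "\<forall>c. c \<noteq> a \<and> c \<noteq> b \<longrightarrow> B$c$j = 0"
  shows "(\<Sum>n\<in>UNIV. B$n$j * y$n) = y$a - y$b"
proof -
  have "(\<Sum>n\<in>UNIV. B$n$j * y$n) = (\<Sum>n\<in>UNIV. (if n = a then y$a else 0) + (if n = b then - y$b else 0))"
    by (rule sum.cong) (use assms in auto)
  also have "\<dots> = y$a - y$b" by (simp add: sum.distrib)
  finally show ?thesis .
qed

lemma incidence_transpose_kernel_constant:
  fixes B :: "real^'e^'n"
  assumes inc: "incidence_matrix B" and con: "connected_incidence B"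
    and y: "transpose B *v y = 0"
  shows "y$p = y$q"
proof -
  have col: "(\<Sum>n\<in>UNIV. B$n$j * y$n) = 0" for j
    using y by (simp add: vec_eq_iff matrix_vector_mult_def transpose_def mult.commute)
  have adj: "y$p = y$q" if "(p,q) \<in> adj_of B" for p q
  proof -
    from that obtain j where pq: "p \<noteq> q" "B$p$j \<noteq> 0" "B$q$j \<noteq> 0" by (auto simp: adj_of_def)
    from inc obtain a b where ab: "a \<noteq> b" "B$a$j = 1" "B$b$j = -1" "\<forall>c. c \<noteq> a \<and> c \<noteq> b \<longrightarrow> B$c$j = 0"
      unfolding incidence_matrix_def by blast
    have "y$a = y$b" using incidence_column_sum[OF ab, of y] col[of j] by simp
    moreover have "p = a \<or> p = b" "q = a \<or> q = b" using ab pq by auto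
    ultimately show ?thesis using pq by auto
  qed
  have "y$p = y$q" if "(p,q) \<in> (adj_of B)\<^sup>*" for p q
    using that by (induction rule: rtrancl_induct) (auto dest: adj)
  then show ?thesis using con unfolding connected_incidence_def by blast
qed

lemma transpose_mult_vec_split:
  fixes B :: "real^'e^('g::finite + 'l::finite)"
  shows "transpose B *v y = transpose (BG B) *v (\<chi> i. y$Inl i) + transpose (BL B) *v (\<chi> i. y$Inr i)"
proof -
  have "(transpose B *v y)$j = (\<Sum>n\<in>(UNIV::'g set) <+> (UNIV::'l set). B$n$j * y$n)" for j
    by (simp add: matrix_vector_mult_def transpose_def mult.commute)
  also have "\<dots> j = (\<Sum>i\<in>UNIV. B$Inl i$j * y$Inl i) + (\<Sum>i\<in>UNIV. B$Inr i$j * y$Inr i)" for j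
    by (subst sum.Plus) auto
  finally show ?thesis
    by (simp add: vec_eq_iff matrix_vector_mult_def transpose_def BL_def BG_def mult.commute
        del: transpose_matrix_vector)
qed

lemma transpose_BL_injective:
  fixes B :: "real^'e^('g::finite + 'l::finite)"
  assumes inc: "incidence_matrix B" and con: "connected_incidence B"
    and x: "transpose (BL B) *v x = 0"
  shows "x = 0"
proof -
  define y :: "real^('g+'l)" where "y = (\<chi> n. case n of Inl _ \<Rightarrow> 0 | Inr i \<Rightarrow> x$i)"
  have "(\<chi> i. y$Inl i) = 0" "(\<chi> i. y$Inr i) = x" by (simp_all add: y_def vec_eq_iff)
  then have "transpose B *v y = 0"
    using x by (simp add: transpose_mult_vec_split[of B y] del: transpose_matrix_vector)
  then have "y$Inr i = y$Inl undefined" for i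
    by (rule incidence_transpose_kernel_constant[OF inc con])
  then show ?thesis by (simp add: y_def vec_eq_iff)
qed

lemma sum_BG_mult_vec_eq_0:
  fixes B :: "real^'e^('g::finite + 'l::finite)"
  assumes inc: "incidence_matrix B" and z: "BL B *v z = 0"
  shows "(\<Sum>i\<in>UNIV. (BG B *v z)$i) = 0"
proof -
  have col: "(\<Sum>i\<in>UNIV. B$Inl i$j) + (\<Sum>i\<in>UNIV. B$Inr i$j) = 0" for j
  proof -
    from inc obtain a b where ab: "a \<noteq> b" "B$a$j = 1" "B$b$j = -1" "\<forall>c. c \<noteq> a \<and> c \<noteq> b \<longrightarrow> B$c$j = 0"
      unfolding incidence_matrix_def by blast
    have "(\<Sum>n\<in>(UNIV::'g set) <+> (UNIV::'l set). B$n$j) = 0"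
      using incidence_column_sum[OF ab, of 1] by simp
    then show ?thesis by (subst (asm) sum.Plus) auto
  qed
  have "(\<Sum>i\<in>UNIV. (BG B *v z)$i) + (\<Sum>i\<in>UNIV. (BL B *v z)$i)
      = (\<Sum>j\<in>UNIV. z$j * ((\<Sum>i\<in>UNIV. B$Inl i$j) + (\<Sum>i\<in>UNIV. B$Inr i$j)))"
    by (simp add: matrix_vector_mult_def BG_def BL_def sum_distrib_left distrib_left sum.distrib
        mult.commute sum.swap[of _ "UNIV::'e set"])
  also have "\<dots> = 0" using col by simp
  finally show ?thesis using z by simp
qed

lemma ker_BG_BL_orthogonal_imBT:
  fixes B :: "real^'e^('g::finite + 'l::finite)"
  assumes "BG B *v x = 0" "BL B *v x = 0" and "y \<in> imBT B"
  shows "x \<bullet> y = 0"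
proof -
  have "(B *v x)$n = 0" for n
    using assms(1,2) by (cases n) (simp_all add: vec_eq_iff matrix_vector_mult_def BG_def BL_def)
  then have "B *v x = 0" by (simp add: vec_eq_iff)
  moreover obtain z where "y = transpose B *v z" using assms(3) by (auto simp: imBT_def)
  ultimately show ?thesis by (simp add: inner_matrix_vector_mult del: transpose_matrix_vector)
qed

section \<open>The reduced incidence matrix\<close>

lemma BL_weighted_gram_invertible:
  fixes B :: "real^'e^('g::finite + 'l::finite)"
  assumes inc: "incidence_matrix B" and con: "connected_incidence B" and g: "\<And>k. g$k > 0"
  shows "invertible (BL B ** diagm g ** transpose (BL B))"
proof -
  have "x = 0" if h: "(BL B ** diagm g ** transpose (BL B)) *v x = 0" for x
  proof -
    define z where "z = transpose (BL B) *v x"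
    have "BL B *v (diagm g *v z) = (BL B ** diagm g ** transpose (BL B)) *v x"
      by (simp add: z_def matrix_vector_mul_assoc matrix_mul_assoc del: transpose_matrix_vector)
    then have "x \<bullet> (BL B *v (diagm g *v z)) = 0" using h by simp
    then have "z \<bullet> (diagm g *v z) = 0"
      by (simp add: inner_matrix_vector_mult[of x] z_def del: transpose_matrix_vector)
    then have "(\<Sum>i\<in>UNIV. g$i * z$i * z$i) = 0" by (simp add: inner_diagm)
    moreover have "\<forall>i\<in>UNIV. g$i * z$i * z$i \<ge> 0"
      using g by (metis less_imp_le mult.assoc mult_nonneg_nonneg zero_le_square)
    ultimately have "\<forall>i\<in>UNIV. g$i * z$i * z$i = 0"
      using sum_nonneg_eq_0_iff[of UNIV "\<lambda>i. g$i * z$i * z$i"] by auto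
    then have "z = 0" using g by (auto simp: vec_eq_iff) (metis less_irrefl)
    then show "x = 0"
      using transpose_BL_injective[OF inc con] by (simp add: z_def del: transpose_matrix_vector)
  qed
  then show ?thesis
    by (simp add: invertible_left_inverse matrix_left_invertible_ker del: transpose_matrix_vector)
qed

text \<open>\<open>BSg\<close> is \<open>B\<^sub>S\<close> with \<open>\<Gamma>'(\<eta>)\<close> replaced by an arbitrary diagonal \<open>diagm g\<close>;
  \<open>transpose BSg\<close> is \<open>transpose BGm\<close> followed by the \<open>diagm g\<close>-orthogonal projection onto
  the kernel of \<open>BLm ** diagm g\<close>.\<close>

locale reduced_incidence =
  fixes BLm :: "real^'e^'l::finite" and BGm :: "real^'e^'g::finite" and g :: "real^'e"
  assumes gram_invertible: "invertible (BLm ** diagm g ** transpose BLm)"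
begin

abbreviation "gram \<equiv> BLm ** diagm g ** transpose BLm"
abbreviation "gram_inv \<equiv> matrix_inv gram"
abbreviation "BSg \<equiv> BGm ** (mat 1 - diagm g ** transpose BLm ** gram_inv ** BLm)"

lemma gram_inv_apply: "gram *v (gram_inv *v u) = u"
  by (metis matrix_vector_mul_assoc matrix_inv_mult(1)[OF gram_invertible] matrix_vector_mul_lid)

lemma transpose_gram_inv: "transpose gram_inv = gram_inv"
  by (rule transpose_matrix_inv_symmetric[OF gram_invertible])
     (simp add: matrix_transpose_mul transpose_diagm matrix_mul_assoc)

lemma transpose_reduced_apply:
  "transpose BSg *v w = transpose BGm *v w
     - transpose BLm *v (gram_inv *v (BLm *v (diagm g *v (transpose BGm *v w))))"
proof -
  have "transpose BSg = (mat 1 - transpose BLm ** gram_inv ** BLm ** diagm g) ** transpose BGm"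
    by (simp add: matrix_transpose_mul transpose_diff transpose_diagm transpose_gram_inv matrix_mul_assoc)
  then show ?thesis
    by (simp add: matrix_vector_mult_diff_rdistrib matrix_vector_mul_assoc[symmetric]
        del: transpose_matrix_vector)
qed

lemma BL_weighted_transpose_reduced: "BLm *v (diagm g *v (transpose BSg *v w)) = 0"
proof -
  define v where "v = transpose BGm *v w"
  have "BLm *v (diagm g *v (transpose BSg *v w)) =
      BLm *v (diagm g *v v) - gram *v (gram_inv *v (BLm *v (diagm g *v v)))"
    unfolding transpose_reduced_apply v_def[symmetric]
    by (simp add: matrix_vector_mult_diff_distrib matrix_vector_mul_assoc matrix_mul_assoc
        del: transpose_matrix_vector)
  also have "\<dots> = 0" by (simp only: gram_inv_apply) simp
  finally show ?thesis .
qed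

lemma reduced_apply_ker_BL: "BLm *v z = 0 \<Longrightarrow> BSg *v z = BGm *v z"
  by (simp add: matrix_vector_mult_diff_distrib matrix_vector_mult_diff_rdistrib
      matrix_vector_mul_assoc[symmetric] del: transpose_matrix_vector)

lemma transpose_reduced_energy_le:
  assumes g: "\<And>k. g$k \<ge> 0"
  shows "(transpose BSg *v w) \<bullet> (diagm g *v (transpose BSg *v w))
        \<le> (transpose BGm *v w) \<bullet> (diagm g *v (transpose BGm *v w))"
proof -
  define v where "v = transpose BGm *v w"
  define z where "z = gram_inv *v (BLm *v (diagm g *v v))"
  define q where "q = transpose BLm *v z"
  define d where "d = v - q"
  have red: "transpose BSg *v w = d"
    unfolding transpose_reduced_apply d_def q_def z_def v_def ..
  have vq: "v \<bullet> (diagm g *v q) = (BLm *v (diagm g *v v)) \<bullet> z"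
    by (simp add: q_def inner_diagm_commute[of v] del: transpose_matrix_vector)
       (metis inner_commute inner_matrix_vector_mult transpose_transpose)
  have "q \<bullet> (diagm g *v q) = z \<bullet> (gram *v z)"
    by (simp add: q_def inner_matrix_vector_mult[of _ BLm, symmetric]
        matrix_vector_mul_assoc[symmetric] del: transpose_matrix_vector)
  also have "gram *v z = BLm *v (diagm g *v v)"
    unfolding z_def by (rule gram_inv_apply)
  finally have qq: "q \<bullet> (diagm g *v q) = (BLm *v (diagm g *v v)) \<bullet> z"
    by (simp add: inner_commute)
  have "v \<bullet> (diagm g *v v) = d \<bullet> (diagm g *v d) + 2 * (d \<bullet> (diagm g *v q)) + q \<bullet> (diagm g *v q)"
    unfolding d_def
    by (simp add: matrix_vector_mult_diff_distrib inner_diff_left inner_diff_right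
        algebra_simps) (rule inner_diagm_commute)
  also have "d \<bullet> (diagm g *v q) = 0"
    using vq qq by (simp add: d_def inner_diff_left)
  finally show ?thesis
    using inner_diagm_self_nonneg[of g q] g red v_def by simp
qed

end

lemma Gammap_diagm: "Gammap gam \<eta> = diagm (\<chi> k. gam$k * cos (\<eta>$k))"
  by (simp add: Gammap_def diagm_mult_diagm vcos_def)

lemma BS_eq_reduced:
  "BS B gam \<eta> = BG B ** (mat 1 - diagm (\<chi> k. gam$k * cos (\<eta>$k)) ** transpose (BL B)
      ** matrix_inv (BL B ** diagm (\<chi> k. gam$k * cos (\<eta>$k)) ** transpose (BL B)) ** BL B)"
  by (simp add: BS_def Gammap_diagm)

lemma reduced_incidence_Omega:
  fixes B :: "real^'e^('g::finite + 'l::finite)"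
  assumes "incidence_matrix B" "connected_incidence B" "\<forall>k. gam$k > 0" "\<eta> \<in> Omega"
  shows "reduced_incidence (BL B) (\<chi> k. gam$k * cos (\<eta>$k))"
proof
  have "cos (\<eta>$k) > 0" for k
  proof -
    have "\<bar>\<eta>$k\<bar> < pi/2" using assms(4) by (simp add: Omega_def)
    then show ?thesis by (intro cos_gt_zero_pi) auto
  qed
  then show "invertible (BL B ** diagm (\<chi> k. gam$k * cos (\<eta>$k)) ** transpose (BL B))"
    using assms by (intro BL_weighted_gram_invertible) auto
qed

section \<open>The sine nonlinearity and its potential\<close>

lemma abs_sin_diff_le: "\<bar>sin x - sin y\<bar> \<le> \<bar>x - (y::real)\<bar>"
proof -
  have "\<bar>sin x - sin y\<bar> = 2 * \<bar>sin ((x - y) / 2)\<bar> * \<bar>cos ((x + y) / 2)\<bar>"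
    by (simp add: sin_diff_sin abs_mult)
  also have "\<dots> \<le> 2 * \<bar>(x - y) / 2\<bar> * 1"
    using abs_sin_x_le_abs_x[of "(x-y)/2"] abs_cos_le_one[of "(x+y)/2"] by (intro mult_mono) auto
  finally show ?thesis by simp
qed

lemma norm_vsin_diff_le: "norm (vsin x - vsin y) \<le> norm (x - y)"
  by (rule norm_le_componentwise_cart) (simp add: vsin_def abs_sin_diff_le)

lemma sin_diff_mult_ge:
  assumes r: "r < pi/2" and x: "\<bar>x\<bar> \<le> r" and y: "\<bar>y\<bar> \<le> r"
  shows "cos r * (x - y)^2 \<le> (x - y) * (sin x - sin y)"
proof -
  have main: "cos r * (b - a)^2 \<le> (b - a) * (sin b - sin a)"
    if ab: "a < b" "\<bar>a\<bar> \<le> r" "\<bar>b\<bar> \<le> r" for a b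
  proof -
    obtain z where z: "a < z" "z < b" "sin b - sin a = (b - a) * cos z"
      using MVT2[OF ab(1), of sin cos] by (auto intro: DERIV_sin)
    have "cos r \<le> cos \<bar>z\<bar>"
      using z ab r by (intro cos_monotone_0_pi_le) auto
    then have "cos r * (b-a)^2 \<le> cos z * (b-a)^2" by (intro mult_right_mono) auto
    also have "\<dots> = (b - a) * (sin b - sin a)" using z by (simp add: power2_eq_square)
    finally show ?thesis .
  qed
  show ?thesis
  proof (cases x y rule: linorder_cases)
    case less then show ?thesis using main[OF less x y] by (simp add: power2_commute algebra_simps)
  next
    case equal then show ?thesis by simp
  next
    case greater then show ?thesis using main[OF greater y x] by simp
  qed
qed

text \<open>The Bregman divergence of \<open>-cos\<close>, i.e.\ the potential energy of one line relative to
  the equilibrium angle \<open>a\<close>.\<close>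

definition edge_potential :: "real \<Rightarrow> real \<Rightarrow> real" where
  "edge_potential a x = cos a - cos x - sin a * (x - a)"

lemma edge_potential_deriv:
  "(edge_potential a has_real_derivative (sin x - sin a)) (at x within S)"
  unfolding edge_potential_def by (auto intro!: derivative_eq_intros)

lemma edge_potential_mono_right:
  assumes "a \<le> x1" "x1 \<le> x2" "x2 \<le> pi/2" "-(pi/2) \<le> a"
  shows "edge_potential a x1 \<le> edge_potential a x2"
  by (rule DERIV_nonneg_imp_nondecreasing[OF assms(2)])
     (use assms in \<open>auto intro!: exI edge_potential_deriv sin_monotone_2pi_le\<close>)

lemma edge_potential_mono_left:
  assumes "x2 \<le> x1" "x1 \<le> a" "-(pi/2) \<le> x2" "a \<le> pi/2"
  shows "edge_potential a x1 \<le> edge_potential a x2"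
  by (rule DERIV_nonpos_imp_nonincreasing[OF assms(1)])
     (use assms in \<open>auto intro!: exI edge_potential_deriv sin_monotone_2pi_le\<close>)

lemma edge_potential_nonneg:
  assumes "\<bar>a\<bar> \<le> pi/2" "\<bar>x\<bar> \<le> pi/2"
  shows "edge_potential a x \<ge> 0"
proof -
  have "edge_potential a a \<le> edge_potential a x"
    using assms by (cases "a \<le> x") (auto intro: edge_potential_mono_right edge_potential_mono_left)
  then show ?thesis by (simp add: edge_potential_def)
qed

lemma edge_potential_le: "edge_potential a x \<le> 2 * \<bar>x - a\<bar>"
proof -
  have "\<bar>cos a - cos x\<bar> \<le> \<bar>x - a\<bar>"
    using abs_sin_diff_le[of "a + pi/2" "x + pi/2"] by (simp add: sin_add)
  moreover have "\<bar>sin a * (x - a)\<bar> \<le> \<bar>x - a\<bar>"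
    by (simp add: abs_mult mult_left_le_one_le)
  ultimately show ?thesis unfolding edge_potential_def by argo
qed

text \<open>Around an equilibrium angle \<open>a\<close> we use the window of radius \<open>well_radius a\<close>, halfway to
  the boundary of \<open>(-\<pi>/2, \<pi>/2)\<close>; below \<open>well_depth a\<close> the potential confines \<open>x\<close> to it.\<close>

definition well_radius :: "real \<Rightarrow> real" where
  "well_radius a = (pi/2 - \<bar>a\<bar>) / 2"

definition well_depth :: "real \<Rightarrow> real" where
  "well_depth a = min (edge_potential a (a + well_radius a)) (edge_potential a (a - well_radius a))"

lemma well_radius_bounds:
  assumes "\<bar>a\<bar> < pi/2"
  shows "well_radius a > 0" "a + well_radius a < pi/2" "a - well_radius a > -(pi/2)"
  using assms abs_ge_self[of a] abs_ge_minus_self[of a] unfolding well_radius_def by argo+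

lemma well_depth_pos:
  assumes a: "\<bar>a\<bar> < pi/2"
  shows "well_depth a > 0"
proof -
  note r = well_radius_bounds[OF a]
  obtain z where z: "a < z" "z < a + well_radius a"
    "edge_potential a (a + well_radius a) - edge_potential a a = well_radius a * (sin z - sin a)"
    using MVT2[OF _ edge_potential_deriv, of a "a + well_radius a"] r by auto
  have "sin a < sin z" using z r a by (intro sin_monotone_2pi) auto
  then have right: "edge_potential a (a + well_radius a) > 0"
    using z r by (simp add: edge_potential_def)
  obtain z' where z': "a - well_radius a < z'" "z' < a"
    "edge_potential a a - edge_potential a (a - well_radius a) = well_radius a * (sin z' - sin a)"
    using MVT2[OF _ edge_potential_deriv, of "a - well_radius a" a] r by auto
  have "sin z' < sin a" using z' r a by (intro sin_monotone_2pi) auto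
  then have "well_radius a * (sin z' - sin a) < 0" using r by (simp add: mult_pos_neg)
  then have left: "edge_potential a (a - well_radius a) > 0"
    using z' by (simp add: edge_potential_def)
  from left right show ?thesis by (simp add: well_depth_def)
qed

lemma edge_potential_less_well_depth:
  assumes a: "\<bar>a\<bar> < pi/2" and x: "\<bar>x\<bar> < pi/2" and U: "edge_potential a x < well_depth a"
  shows "\<bar>x - a\<bar> < well_radius a"
proof (rule ccontr)
  assume "\<not> \<bar>x - a\<bar> < well_radius a"
  then consider "x \<ge> a + well_radius a" | "x \<le> a - well_radius a" by linarith
  then show False
  proof cases
    case 1
    then have "edge_potential a (a + well_radius a) \<le> edge_potential a x"
      using well_radius_bounds[OF a] x a by (intro edge_potential_mono_right) auto
    then show False using U by (simp add: well_depth_def)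
  next
    case 2
    then have "edge_potential a (a - well_radius a) \<le> edge_potential a x"
      using well_radius_bounds[OF a] x a by (intro edge_potential_mono_left) auto
    then show False using U by (simp add: well_depth_def)
  qed
qed

section \<open>Calculus on the half-line\<close>

lemma has_vector_derivative_vec_nth:
  "(f has_vector_derivative D) F \<Longrightarrow> ((\<lambda>t. f t $ k) has_real_derivative D $ k) F"
  using bounded_linear.has_vector_derivative[OF bounded_linear_vec_nth, of f D F k]
  by (simp add: has_real_derivative_iff_has_vector_derivative)

lemma ex_pos_norm_bound:
  assumes "\<forall>t\<ge>0. norm (f t) \<le> L"
  shows "\<exists>L>0. \<forall>t\<ge>0. norm (f t) \<le> L"
  using assms by (intro exI[of _ "\<bar>L\<bar> + 1"]) force

lemma real_derivative_upper_bound: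
  fixes f :: "real \<Rightarrow> real"
  assumes d: "\<And>t. t \<ge> 0 \<Longrightarrow> (f has_real_derivative f' t) (at t within {0..})"
    and ab: "0 \<le> a" "a \<le> b" and c: "\<And>t. a \<le> t \<Longrightarrow> t \<le> b \<Longrightarrow> f' t \<le> c"
  shows "f b - f a \<le> c * (b - a)"
proof (cases "a = b")
  case False
  then have lt: "a < b" using ab by simp
  have "continuous_on {0..} f"
    unfolding continuous_on_eq_continuous_within using d by (auto intro: DERIV_continuous)
  then have cont: "continuous_on {a..b} f"
    by (rule continuous_on_subset) (use ab in auto)
  have dd: "(f has_real_derivative f' t) (at t)" if "a < t" for t
    using d[of t] at_within_interior[of t "{0..}"] that ab by (auto simp: interior_Ici[of "-1"])
  obtain l z where z: "a < z" "z < b" "DERIV f z :> l" "f b - f a = (b - a) * l"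
    using MVT[OF lt cont] dd by (meson differentiableI real_differentiable_def)
  have "l = f' z" using DERIV_unique[OF z(3) dd[OF z(1)]] .
  then show ?thesis using z c[of z] lt by (simp add: mult.commute mult_left_mono)
qed simp

lemma vector_derivative_norm_bound:
  fixes f :: "real \<Rightarrow> 'a::real_normed_vector"
  assumes d: "\<And>t. t \<ge> 0 \<Longrightarrow> (f has_vector_derivative f' t) (at t within {0..})"
    and ab: "0 \<le> a" "a \<le> b" and c: "\<And>t. a \<le> t \<Longrightarrow> t \<le> b \<Longrightarrow> norm (f' t) \<le> L"
  shows "norm (f b - f a) \<le> L * (b - a)"
proof -
  have "norm (f b - f a) \<le> L * norm (b - a)"
  proof (rule differentiable_bound[where S="{a..b}" and f'="\<lambda>t h. h *\<^sub>R f' t"])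
    fix x assume x: "x \<in> {a..b}"
    have "(f has_vector_derivative f' x) (at x within {a..b})"
      using d[of x] x ab by (auto intro: has_vector_derivative_within_subset)
    then show "(f has_derivative (\<lambda>h. h *\<^sub>R f' x)) (at x within {a..b})"
      by (simp add: has_vector_derivative_def)
    have "onorm (\<lambda>h::real. h *\<^sub>R f' x) = onorm (\<lambda>h::real. h) * norm (f' x)"
      by (rule onorm_scaleR_left) (rule bounded_linear_ident)
    then show "onorm (\<lambda>h. h *\<^sub>R f' x) \<le> L" using c[of x] x by (simp add: onorm_id)
  qed (use ab in auto)
  then show ?thesis using ab by simp
qed

lemma antimono_nonneg_eventually_small_decrease:
  fixes f :: "real \<Rightarrow> real"
  assumes mono: "\<And>s t. 0 \<le> s \<Longrightarrow> s \<le> t \<Longrightarrow> f t \<le> f s"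
    and lb: "\<And>t. t \<ge> 0 \<Longrightarrow> f t \<ge> 0" and k: "\<kappa> > 0"
  shows "\<exists>T\<ge>0. \<forall>t\<ge>T. \<forall>h\<ge>0. f t - f (t + h) < \<kappa>"
proof -
  let ?S = "f ` {0..}"
  have bdd: "bdd_below ?S" using lb by (auto intro!: bdd_belowI[of _ 0])
  obtain T where T: "T \<ge> 0" "f T < Inf ?S + \<kappa>"
    using cInf_less_iff[OF _ bdd, of "Inf ?S + \<kappa>"] k by auto
  have "f t - f (t + h) < \<kappa>" if "t \<ge> T" "h \<ge> 0" for t h
  proof -
    have "f t \<le> f T" using mono T that by auto
    moreover have "Inf ?S \<le> f (t + h)" using T that by (intro cInf_lower bdd) auto
    ultimately show ?thesis using T by linarith
  qed
  then show ?thesis using T by blast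
qed

locale grid_equilibrium =
  fixes B :: "real^'e^('g::finite + 'l::finite)"
    and gam :: "real^'e" and Mv Av :: "real^'g"
    and ub :: "real^'g" and \<eta>b :: "real^'e" and \<omega>b :: "real^'g"
  assumes inc: "incidence_matrix B" and con: "connected_incidence B"
    and gam: "\<forall>k. gam $ k > 0" and Mpos: "\<forall>i. Mv $ i > 0" and Apos: "\<forall>i. Av $ i > 0"
    and etab: "\<eta>b \<in> Omega" and etab_im: "\<eta>b \<in> imBT B"
    and eq: "is_equilibrium B gam Mv Av ub \<eta>b \<omega>b"
begin

text \<open>\<open>B\<^sub>S(\<eta>b)\<^sup>T \<omega>b = 0\<close> says that \<open>B\<^sup>T (\<omega>b, -z) = 0\<close> for some load vector \<open>z\<close>, so
  \<open>\<omega>b\<close> is constant by connectedness, and \<open>B\<^sub>G z\<close> sums to zero whenever \<open>B\<^sub>L z = 0\<close>.\<close>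

lemma omegab_orthogonal_BG_ker_BL:
  assumes z: "BL B *v z = 0"
  shows "\<omega>b \<bullet> (BG B *v z) = 0"
proof -
  interpret r: reduced_incidence "BL B" "BG B" "\<chi> k. gam$k * cos (\<eta>b$k)"
    using reduced_incidence_Omega[OF inc con gam etab] .
  define z0 where "z0 = r.gram_inv *v (BL B *v (diagm (\<chi> k. gam$k * cos (\<eta>b$k)) *v (transpose (BG B) *v \<omega>b)))"
  have "transpose (BS B gam \<eta>b) *v \<omega>b = 0"
    using eq by (simp add: is_equilibrium_def del: transpose_matrix_vector)
  then have e0: "transpose (BG B) *v \<omega>b - transpose (BL B) *v z0 = 0"
    unfolding BS_eq_reduced r.transpose_reduced_apply z0_def .
  define y :: "real^('g+'l)" where "y = (\<chi> n. case n of Inl i \<Rightarrow> \<omega>b$i | Inr j \<Rightarrow> - (z0$j))"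
  have "(\<chi> i. y$Inl i) = \<omega>b" "(\<chi> i. y$Inr i) = - z0" by (simp_all add: y_def vec_eq_iff)
  then have "transpose B *v y = 0"
    using e0 linear_neg[OF matrix_vector_mul_linear, of "transpose (BL B)" z0]
    by (simp add: transpose_mult_vec_split[of B y] del: transpose_matrix_vector)
  then have const: "\<omega>b$i = \<omega>b$undefined" for i
    using incidence_transpose_kernel_constant[OF inc con, of y "Inl i" "Inl undefined"]
    by (simp add: y_def)
  have "\<omega>b \<bullet> (BG B *v z) = (\<Sum>i\<in>UNIV. \<omega>b$undefined * (BG B *v z)$i)"
    unfolding inner_vec_def by (rule sum.cong) (use const in auto)
  also have "\<dots> = 0"
    using sum_BG_mult_vec_eq_0[OF inc z] by (simp add: sum_distrib_left[symmetric])
  finally show ?thesis .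
qed

lemma etab_bound: "\<bar>\<eta>b$k\<bar> < pi/2"
  using etab by (simp add: Omega_def)

text \<open>All angles \<open>\<eta>\<^sub>k\<close> with \<open>\<bar>\<eta>\<^sub>k - \<eta>b\<^sub>k\<bar> < well_radius (\<eta>b\<^sub>k)\<close> lie in \<open>[-window, window]\<close>,
  where \<open>cos \<ge> cos window > 0\<close>.\<close>

definition "window = Max (range (\<lambda>k. \<bar>\<eta>b$k\<bar> + well_radius (\<eta>b$k)))"
definition "depth = Min (range (\<lambda>k. gam$k * well_depth (\<eta>b$k)))"
definition "gmin = Min (range (\<lambda>k. gam$k))"
definition "gmax = Max (range (\<lambda>k. gam$k))"
definition "mmin = Min (range (\<lambda>i. Mv$i))"
definition "amin = Min (range (\<lambda>i. Av$i))"

lemma window_lt: "window < pi/2"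
proof -
  have "\<bar>\<eta>b$k\<bar> + well_radius (\<eta>b$k) < pi/2" for k
    using etab_bound[of k] unfolding well_radius_def by argo
  then show ?thesis unfolding window_def by (subst Max_less_iff) auto
qed

lemma window_ge: "\<bar>\<eta>b$k\<bar> + well_radius (\<eta>b$k) \<le> window"
  unfolding window_def by (rule Max_ge) auto

lemma cos_window_pos: "cos window > 0"
proof -
  have "0 \<le> window"
    using window_ge[of undefined] well_radius_bounds(1)[OF etab_bound[of undefined]] by linarith
  then show ?thesis using window_lt by (intro cos_gt_zero_pi) auto
qed

lemma cos_ge_cos_window: "\<bar>x\<bar> \<le> window \<Longrightarrow> cos window \<le> cos x"
  using window_lt by (subst cos_abs_real[symmetric]) (rule cos_monotone_0_pi_le, auto)

lemma depth_pos: "depth > 0"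
  unfolding depth_def using gam well_depth_pos[OF etab_bound] by (subst Min_gr_iff) auto

lemma depth_le: "depth \<le> gam$k * well_depth (\<eta>b$k)"
  unfolding depth_def by (rule Min_le) auto

lemma gmin_pos: "gmin > 0" unfolding gmin_def using gam by (subst Min_gr_iff) auto
lemma gmin_le: "gmin \<le> gam$k" unfolding gmin_def by (rule Min_le) auto
lemma gmax_ge: "gam$k \<le> gmax" unfolding gmax_def by (rule Max_ge) auto
lemma mmin_pos: "mmin > 0" unfolding mmin_def using Mpos by (subst Min_gr_iff) auto
lemma mmin_le: "mmin \<le> Mv$k" unfolding mmin_def by (rule Min_le) auto
lemma amin_pos: "amin > 0" unfolding amin_def using Apos by (subst Min_gr_iff) auto
lemma amin_le: "amin \<le> Av$k" unfolding amin_def by (rule Min_le) auto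

definition "lyap x w = (\<Sum>i\<in>UNIV. Mv$i/2 * (w$i - \<omega>b$i)^2) + (\<Sum>k\<in>UNIV. gam$k * edge_potential (\<eta>b$k) (x$k))"

lemma lyap_less_depth_near_equilibrium:
  "\<exists>\<epsilon>>0. \<forall>x w. dist x \<eta>b < \<epsilon> \<and> dist w \<omega>b < \<epsilon> \<longrightarrow> lyap x w < depth"
proof -
  define S where "S = (\<Sum>i\<in>UNIV. Mv$i/2) + (\<Sum>k\<in>UNIV. gam$k * 2)"
  have S0: "S \<ge> 0" unfolding S_def using Mpos gam
    by (intro add_nonneg_nonneg sum_nonneg) (auto simp: less_imp_le)
  define \<epsilon> where "\<epsilon> = min 1 (depth / (S + 1))"
  have \<epsilon>: "\<epsilon> > 0" "\<epsilon> \<le> 1" "\<epsilon> \<le> depth / (S + 1)" using depth_pos S0 by (auto simp: \<epsilon>_def)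
  have "lyap x w < depth" if h: "dist x \<eta>b < \<epsilon>" "dist w \<omega>b < \<epsilon>" for x w
  proof -
    have w: "(w$i - \<omega>b$i)^2 \<le> \<epsilon>" for i
    proof -
      have "\<bar>w$i - \<omega>b$i\<bar> \<le> \<epsilon>"
        using component_le_norm_cart[of "w - \<omega>b" i] h by (simp add: dist_norm)
      then have "\<bar>w$i - \<omega>b$i\<bar>^2 \<le> \<epsilon>^2" by (intro power_mono) auto
      also have "\<epsilon>^2 \<le> \<epsilon>" using \<epsilon> by (simp add: power2_eq_square mult_left_le_one_le)
      finally show ?thesis by simp
    qed
    have x: "edge_potential (\<eta>b$k) (x$k) \<le> 2 * \<epsilon>" for k
    proof -
      have "\<bar>x$k - \<eta>b$k\<bar> \<le> \<epsilon>"
        using component_le_norm_cart[of "x - \<eta>b" k] h by (simp add: dist_norm)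
      then show ?thesis using edge_potential_le[of "\<eta>b$k" "x$k"] by argo
    qed
    have "lyap x w \<le> (\<Sum>i\<in>UNIV. Mv$i/2 * \<epsilon>) + (\<Sum>k\<in>UNIV. gam$k * (2 * \<epsilon>))"
      unfolding lyap_def using w x Mpos gam
      by (intro add_mono sum_mono mult_left_mono) (auto simp: less_imp_le)
    also have "\<dots> = S * \<epsilon>"
      by (simp add: S_def sum_distrib_left sum_distrib_right algebra_simps sum_divide_distrib)
    also have "\<dots> \<le> S * (depth / (S + 1))" using \<epsilon> S0 by (intro mult_left_mono) auto
    also have "\<dots> < depth" using S0 depth_pos by (simp add: field_simps)
    finally show ?thesis .
  qed
  then show ?thesis using \<epsilon> by blast
qed

definition "BGL x = (BG B *v x, BL B *v x)"

lemma bounded_linear_BGL: "bounded_linear BGL"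
  unfolding BGL_def by (intro bounded_linear_Pair matrix_vector_mul_bounded_linear)

lemma BGL_eq_0_iff: "BGL x = 0 \<longleftrightarrow> BG B *v x = 0 \<and> BL B *v x = 0"
  by (simp add: BGL_def zero_prod_def)

lemma subspace_ker_BGL: "subspace {x. BGL x = 0}"
  using bounded_linear.linear[OF bounded_linear_BGL]
  by (simp add: subspace_def linear_0 linear_add linear_scale)

lemma BGL_coercive: "\<exists>e>0. \<forall>x\<in>orthogonal_comp {x. BGL x = 0}. e * norm x \<le> norm (BGL x)"
proof -
  have "\<exists>e>0. \<forall>x\<in>orthogonal_comp {x. BGL x = 0}. norm (BGL x) \<ge> e * norm x"
  proof (rule injective_imp_isometric)
    show "closed (orthogonal_comp {x. BGL x = 0})"
      by (rule closed_subspace[OF subspace_orthogonal_comp])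
    show "\<forall>x\<in>orthogonal_comp {x. BGL x = 0}. BGL x = 0 \<longrightarrow> x = 0"
      by (auto simp: orthogonal_comp_def orthogonal_def)
  qed (auto intro: subspace_orthogonal_comp bounded_linear_BGL)
  then show ?thesis by auto
qed

end

section \<open>Trajectories: conservation law and Lyapunov function\<close>

locale grid_trajectory = grid_equilibrium +
  fixes \<eta> and \<omega>
  assumes sol: "is_solution B gam Mv Av ub \<eta> \<omega>"
    and flow0: "BL B *v (diagm gam *v vsin (\<eta> 0)) = BL B *v (diagm gam *v vsin \<eta>b)"
    and eta0_im: "\<eta> 0 \<in> imBT B"
begin

definition "eta_rate t = transpose (BS B gam (\<eta> t)) *v \<omega> t"
definition "omega_rate t = (SOME w'. (\<omega> has_vector_derivative w') (at t within {0..}) \<and>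
   diagm Mv *v w' = - (diagm Av *v \<omega> t) - (BG B ** diagm gam) *v vsin (\<eta> t) + ub)"
definition "gcos t = (\<chi> k. gam$k * cos (\<eta> t $ k))"
definition "omega_err t = \<omega> t - \<omega>b"
definition "sin_err t = vsin (\<eta> t) - vsin \<eta>b"
definition "flow_err t = BG B *v (diagm gam *v sin_err t)"
definition "V t = lyap (\<eta> t) (\<omega> t)"

lemma eta_Omega: "t \<ge> 0 \<Longrightarrow> \<eta> t \<in> Omega"
  using sol by (simp add: is_solution_def)

lemma eta_deriv: "t \<ge> 0 \<Longrightarrow> (\<eta> has_vector_derivative eta_rate t) (at t within {0..})"
  using sol by (simp add: is_solution_def eta_rate_def del: transpose_matrix_vector)

lemma omega_rate:
  assumes "t \<ge> 0"
  shows "(\<omega> has_vector_derivative omega_rate t) (at t within {0..})"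
    and "diagm Mv *v omega_rate t = - (diagm Av *v \<omega> t) - (BG B ** diagm gam) *v vsin (\<eta> t) + ub"
  using someI_ex[of "\<lambda>w'. (\<omega> has_vector_derivative w') (at t within {0..}) \<and>
      diagm Mv *v w' = - (diagm Av *v \<omega> t) - (BG B ** diagm gam) *v vsin (\<eta> t) + ub"]
    sol assms unfolding omega_rate_def is_solution_def by blast+

lemma M_omega_rate: "t \<ge> 0 \<Longrightarrow> diagm Mv *v omega_rate t = - (diagm Av *v omega_err t) - flow_err t"
proof -
  assume t: "t \<ge> 0"
  have "- (diagm Av *v \<omega>b) - (BG B ** diagm gam) *v vsin \<eta>b + ub = 0"
    using eq by (simp add: is_equilibrium_def)
  then have "diagm Mv *v omega_rate t = - (diagm Av *v \<omega> t) - (BG B ** diagm gam) *v vsin (\<eta> t) + ub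
      - (- (diagm Av *v \<omega>b) - (BG B ** diagm gam) *v vsin \<eta>b + ub)"
    using omega_rate(2)[OF t] by simp
  also have "\<dots> = - (diagm Av *v omega_err t) - flow_err t"
    by (simp add: omega_err_def flow_err_def sin_err_def matrix_vector_mult_diff_distrib
        matrix_vector_mul_assoc algebra_simps)
  finally show ?thesis .
qed

lemma reduced_incidence_gcos: "t \<ge> 0 \<Longrightarrow> reduced_incidence (BL B) (gcos t)"
  unfolding gcos_def using reduced_incidence_Omega[OF inc con gam eta_Omega] .

lemma BS_gcos: "BS B gam (\<eta> t) = BG B ** (mat 1 - diagm (gcos t) ** transpose (BL B)
      ** matrix_inv (BL B ** diagm (gcos t) ** transpose (BL B)) ** BL B)"
  unfolding BS_eq_reduced gcos_def ..

lemma flow_conserved: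
  assumes t: "t \<ge> 0"
  shows "BL B *v (diagm gam *v vsin (\<eta> t)) = BL B *v (diagm gam *v vsin \<eta>b)"
proof -
  have "(BL B *v (diagm gam *v vsin (\<eta> t)))$j = (BL B *v (diagm gam *v vsin (\<eta> 0)))$j" for j
  proof -
    define f where "f t = (\<Sum>k\<in>UNIV. BL B$j$k * (gam$k * sin (\<eta> t$k)))" for t
    have "(f has_real_derivative 0) (at x within {0..})" if x: "x \<in> {0..}" for x
    proof -
      interpret r: reduced_incidence "BL B" "BG B" "gcos x" using reduced_incidence_gcos x by simp
      have "(f has_real_derivative
          (\<Sum>k\<in>UNIV. BL B$j$k * (gam$k * (cos (\<eta> x$k) * eta_rate x$k)))) (at x within {0..})"
        unfolding f_def using x
        by (intro DERIV_sum DERIV_cmult DERIV_chain2[OF DERIV_sin] has_vector_derivative_vec_nth eta_deriv)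
          auto
      moreover have "(\<Sum>k\<in>UNIV. BL B$j$k * (gam$k * (cos (\<eta> x$k) * eta_rate x$k)))
          = (BL B *v (diagm (gcos x) *v eta_rate x))$j"
        unfolding diagm_mult_vec by (simp add: matrix_vector_mult_def gcos_def mult_ac)
      moreover have "BL B *v (diagm (gcos x) *v eta_rate x) = 0"
        unfolding eta_rate_def BS_gcos by (rule r.BL_weighted_transpose_reduced)
      ultimately show ?thesis by simp
    qed
    then have "f t = f 0"
      using has_field_derivative_zero_constant[of "{0..}" f] t by force
    then show ?thesis
      unfolding diagm_mult_vec by (simp add: f_def matrix_vector_mult_def vsin_def)
  qed
  then show ?thesis using flow0 by (simp add: vec_eq_iff)
qed

lemma BL_sin_err: "t \<ge> 0 \<Longrightarrow> BL B *v (diagm gam *v sin_err t) = 0"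
  using flow_conserved by (simp add: sin_err_def matrix_vector_mult_diff_distrib)

lemma BS_sin_err: "t \<ge> 0 \<Longrightarrow> BS B gam (\<eta> t) *v (diagm gam *v sin_err t) = flow_err t"
proof -
  assume t: "t \<ge> 0"
  interpret r: reduced_incidence "BL B" "BG B" "gcos t" using reduced_incidence_gcos t by simp
  show ?thesis unfolding BS_gcos flow_err_def by (rule r.reduced_apply_ker_BL[OF BL_sin_err[OF t]])
qed

lemma eta_err_orthogonal_ker_BGL:
  assumes x: "BGL x = 0" and t: "t \<ge> 0"
  shows "x \<bullet> (\<eta> t - \<eta>b) = 0"
proof -
  have xBL: "BL B *v x = 0" and xBG: "BG B *v x = 0" using x by (simp_all add: BGL_eq_0_iff)
  define f where "f s = x \<bullet> \<eta> s" for s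
  have "(f has_real_derivative 0) (at s within {0..})" if s: "s \<in> {0..}" for s
  proof -
    interpret r: reduced_incidence "BL B" "BG B" "gcos s" using reduced_incidence_gcos s by simp
    have "(f has_real_derivative x \<bullet> eta_rate s) (at s within {0..})"
      unfolding f_def has_real_derivative_iff_has_vector_derivative
      by (rule bounded_linear.has_vector_derivative[OF bounded_linear_inner_right eta_deriv])
        (use s in auto)
    moreover have "x \<bullet> eta_rate s = (BS B gam (\<eta> s) *v x) \<bullet> \<omega> s"
      unfolding eta_rate_def inner_matrix_vector_mult transpose_transpose ..
    moreover have "BS B gam (\<eta> s) *v x = 0"
      unfolding BS_gcos r.reduced_apply_ker_BL[OF xBL] by (rule xBG)
    ultimately show ?thesis by simp
  qed
  then have "f t = f 0"
    using has_field_derivative_zero_constant[of "{0..}" f] t by force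
  moreover have "f 0 = 0" "x \<bullet> \<eta>b = 0"
    using ker_BG_BL_orthogonal_imBT[OF xBG xBL] eta0_im etab_im by (simp_all add: f_def)
  ultimately show ?thesis by (simp add: f_def inner_diff_right)
qed

lemma V_deriv:
  assumes t: "t \<ge> 0"
  shows "(V has_real_derivative - (omega_err t \<bullet> (diagm Av *v omega_err t))) (at t within {0..})"
proof -
  have d\<omega>: "((\<lambda>s. \<omega> s $ i) has_real_derivative omega_rate t $ i) (at t within {0..})" for i
    by (rule has_vector_derivative_vec_nth[OF omega_rate(1)[OF t]])
  have d\<eta>: "((\<lambda>s. \<eta> s $ k) has_real_derivative eta_rate t $ k) (at t within {0..})" for k
    by (rule has_vector_derivative_vec_nth[OF eta_deriv[OF t]])
  have "(V has_real_derivative (\<Sum>i\<in>UNIV. Mv$i/2 * (2 * (\<omega> t$i - \<omega>b$i) * omega_rate t$i))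
      + (\<Sum>k\<in>UNIV. gam$k * ((sin (\<eta> t$k) - sin (\<eta>b$k)) * eta_rate t$k))) (at t within {0..})"
    unfolding V_def lyap_def
    by (intro DERIV_add DERIV_sum DERIV_cmult DERIV_chain2[OF edge_potential_deriv] d\<eta>)
      (auto intro!: derivative_eq_intros d\<omega>)
  moreover have "(\<Sum>i\<in>UNIV. Mv$i/2 * (2 * (\<omega> t$i - \<omega>b$i) * omega_rate t$i))
      = omega_err t \<bullet> (diagm Mv *v omega_rate t)"
    unfolding inner_diagm omega_err_def by (rule sum.cong) (auto simp: algebra_simps)
  moreover have "(\<Sum>k\<in>UNIV. gam$k * ((sin (\<eta> t$k) - sin (\<eta>b$k)) * eta_rate t$k))
      = (diagm gam *v sin_err t) \<bullet> eta_rate t"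
    by (simp add: inner_vec_def diagm_mult_vec_nth sin_err_def vsin_def mult_ac)
  moreover have "(diagm gam *v sin_err t) \<bullet> eta_rate t = flow_err t \<bullet> \<omega> t"
    unfolding eta_rate_def inner_matrix_vector_mult transpose_transpose BS_sin_err[OF t] ..
  moreover have "flow_err t \<bullet> \<omega>b = 0"
    using omegab_orthogonal_BG_ker_BL[OF BL_sin_err[OF t]] by (simp add: flow_err_def inner_commute)
  ultimately show ?thesis
    by (simp add: M_omega_rate[OF t] omega_err_def inner_diff_right inner_diff_left inner_commute)
qed

end

section \<open>Trajectories starting below the well depth\<close>

locale grid_trajectory_in_well = grid_trajectory +
  assumes V0: "V 0 < depth"
begin

lemma V_antimono: "0 \<le> s \<Longrightarrow> s \<le> t \<Longrightarrow> V t \<le> V s"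
  using real_derivative_upper_bound[of V "\<lambda>t. - (omega_err t \<bullet> (diagm Av *v omega_err t))" s t 0]
    V_deriv inner_diagm_self_nonneg[of Av] Apos by (force simp: less_imp_le)

lemma V_less_depth: "t \<ge> 0 \<Longrightarrow> V t < depth"
  using V_antimono[of 0 t] V0 by simp

lemma kinetic_nonneg: "(\<Sum>i\<in>UNIV. Mv$i/2 * (\<omega> t$i - \<omega>b$i)^2) \<ge> 0"
  using Mpos by (intro sum_nonneg) (simp add: less_imp_le)

lemma eta_bound: "t \<ge> 0 \<Longrightarrow> \<bar>\<eta> t$k\<bar> < pi/2"
  using eta_Omega[of t] by (simp add: Omega_def)

lemma edge_potential_nonneg_at: "t \<ge> 0 \<Longrightarrow> edge_potential (\<eta>b$k) (\<eta> t$k) \<ge> 0"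
  using eta_bound[of t k] etab_bound[of k] by (intro edge_potential_nonneg) auto

lemma potential_nonneg: "t \<ge> 0 \<Longrightarrow> (\<Sum>k\<in>UNIV. gam$k * edge_potential (\<eta>b$k) (\<eta> t$k)) \<ge> 0"
  using gam edge_potential_nonneg_at by (intro sum_nonneg) (simp add: less_imp_le)

lemma V_nonneg: "t \<ge> 0 \<Longrightarrow> V t \<ge> 0"
  using kinetic_nonneg[of t] potential_nonneg[of t] by (simp add: V_def lyap_def)

lemma eta_in_well: "t \<ge> 0 \<Longrightarrow> \<bar>\<eta> t$k - \<eta>b$k\<bar> < well_radius (\<eta>b$k)"
proof -
  assume t: "t \<ge> 0"
  have "gam$k * edge_potential (\<eta>b$k) (\<eta> t$k) \<le> (\<Sum>k\<in>UNIV. gam$k * edge_potential (\<eta>b$k) (\<eta> t$k))"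
    using gam edge_potential_nonneg_at[OF t] by (intro member_le_sum) (auto simp: less_imp_le)
  also have "\<dots> \<le> V t" unfolding V_def lyap_def using kinetic_nonneg[of t] by linarith
  also have "\<dots> < gam$k * well_depth (\<eta>b$k)" using V_less_depth[OF t] depth_le[of k] by linarith
  finally have "edge_potential (\<eta>b$k) (\<eta> t$k) < well_depth (\<eta>b$k)" using gam by auto
  then show ?thesis
    using eta_bound[OF t] etab_bound[of k] by (intro edge_potential_less_well_depth)
qed

lemma eta_in_window: "t \<ge> 0 \<Longrightarrow> \<bar>\<eta> t$k\<bar> \<le> window"
  using eta_in_well[of t k] window_ge[of k] by argo

lemma omega_err_bounded: "\<exists>E. \<forall>t\<ge>0. norm (omega_err t) \<le> E"
proof -
  have "norm (omega_err t) \<le> sqrt (2 * depth / mmin)" if t: "t \<ge> 0" for t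
  proof -
    have "mmin * (norm (omega_err t))^2 \<le> omega_err t \<bullet> (diagm Mv *v omega_err t)"
      using mmin_le mmin_pos by (intro inner_diagm_self_ge) (auto simp: less_imp_le)
    also have "\<dots> = 2 * (\<Sum>i\<in>UNIV. Mv$i/2 * (\<omega> t$i - \<omega>b$i)^2)"
      by (simp add: inner_diagm omega_err_def sum_distrib_left power2_eq_square mult_ac)
    also have "\<dots> \<le> 2 * V t" using potential_nonneg[OF t] by (simp add: V_def lyap_def)
    also have "\<dots> < 2 * depth" using V_less_depth[OF t] by simp
    finally have "(norm (omega_err t))^2 \<le> 2 * depth / mmin"
      using mmin_pos by (simp add: field_simps)
    then show ?thesis by (rule real_le_rsqrt)
  qed
  then show ?thesis by blast
qed

lemma sin_err_bounded: "\<exists>R. \<forall>t\<ge>0. norm (sin_err t) \<le> R"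
proof -
  have "norm (sin_err t) \<le> (\<Sum>k\<in>UNIV. well_radius (\<eta>b$k))" if t: "t \<ge> 0" for t
  proof -
    have "norm (sin_err t) \<le> norm (\<eta> t - \<eta>b)"
      unfolding sin_err_def by (rule norm_vsin_diff_le)
    also have "\<dots> \<le> (\<Sum>k\<in>UNIV. \<bar>(\<eta> t - \<eta>b)$k\<bar>)" by (rule norm_le_l1_cart)
    also have "\<dots> \<le> (\<Sum>k\<in>UNIV. well_radius (\<eta>b$k))"
      using eta_in_well[OF t] by (intro sum_mono) (simp add: less_imp_le)
    finally show ?thesis .
  qed
  then show ?thesis by blast
qed

lemma omega_rate_eq: "t \<ge> 0 \<Longrightarrow> omega_rate t = diagm (\<chi> i. 1 / Mv$i) *v (- (diagm Av *v omega_err t) - flow_err t)"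
proof -
  assume t: "t \<ge> 0"
  have "diagm (\<chi> i. 1 / Mv$i) *v (diagm Mv *v omega_rate t) = omega_rate t"
    using Mpos by (simp add: diagm_mult_vec vec_eq_iff less_imp_neq[symmetric])
  then show ?thesis using M_omega_rate[OF t] by simp
qed

lemma omega_rate_bounded: "\<exists>L. \<forall>t\<ge>0. norm (omega_rate t) \<le> L"
proof -
  obtain E where E: "\<forall>t\<ge>0. norm (omega_err t) \<le> E" using omega_err_bounded by blast
  obtain R where R: "\<forall>t\<ge>0. norm (sin_err t) \<le> R" using sin_err_bounded by blast
  obtain K1 where K1: "K1 > 0" "\<forall>x. norm (diagm (\<chi> i. 1 / Mv$i) *v x) \<le> K1 * norm x"
    using matrix_vector_mult_bounded by blast
  obtain K2 where K2: "K2 > 0" "\<forall>x. norm (diagm Av *v x) \<le> K2 * norm x"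
    using matrix_vector_mult_bounded by blast
  obtain K3 where K3: "K3 > 0" "\<forall>x. norm ((BG B ** diagm gam) *v x) \<le> K3 * norm x"
    using matrix_vector_mult_bounded by blast
  have "norm (omega_rate t) \<le> K1 * (K2 * E + K3 * R)" if t: "t \<ge> 0" for t
  proof -
    have "norm (omega_rate t) \<le> K1 * norm (- (diagm Av *v omega_err t) - flow_err t)"
      using omega_rate_eq[OF t] K1 by simp
    also have "norm (- (diagm Av *v omega_err t) - flow_err t) \<le> norm (diagm Av *v omega_err t) + norm (flow_err t)"
      using norm_triangle_ineq4[of "- (diagm Av *v omega_err t)" "flow_err t"] by simp
    also have "norm (flow_err t) \<le> K3 * norm (sin_err t)"
      using K3(2) by (simp add: flow_err_def matrix_vector_mul_assoc)
    also have "norm (diagm Av *v omega_err t) \<le> K2 * norm (omega_err t)" using K2 by simp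
    finally have "norm (omega_rate t) \<le> K1 * (K2 * norm (omega_err t) + K3 * norm (sin_err t))"
      using K1 by (simp add: mult_left_mono)
    also have "\<dots> \<le> K1 * (K2 * E + K3 * R)"
      using E R t K1 K2 K3 by (intro mult_left_mono add_mono) auto
    finally show ?thesis .
  qed
  then show ?thesis by blast
qed

text \<open>On the conserved set the rate \<open>\<eta>' = B\<^sub>S(\<eta>)\<^sup>T \<omega>\<close> is a \<open>\<Gamma>'(\<eta>)\<close>-projection of
  \<open>B\<^sub>G\<^sup>T \<omega>\<close>, and \<open>\<Gamma>'(\<eta>)\<close> is uniformly positive because \<open>\<eta>\<close> stays in the window.\<close>

lemma eta_rate_bounded: "\<exists>L. \<forall>t\<ge>0. norm (eta_rate t) \<le> L"
proof -
  obtain E where E: "\<forall>t\<ge>0. norm (omega_err t) \<le> E" using omega_err_bounded by blast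
  obtain K where K: "K > 0" "\<forall>x. norm (transpose (BG B) *v x) \<le> K * norm x"
    using matrix_vector_mult_bounded by blast
  define Q where "Q = gmax * (K * (norm \<omega>b + E))^2 / (gmin * cos window)"
  have "norm (eta_rate t) \<le> sqrt Q" if t: "t \<ge> 0" for t
  proof -
    interpret r: reduced_incidence "BL B" "BG B" "gcos t" using reduced_incidence_gcos t by simp
    have lower: "gmin * cos window \<le> gcos t $ k" for k
      using gmin_le[of k] cos_ge_cos_window[OF eta_in_window[OF t]] gmin_pos cos_window_pos
      unfolding gcos_def by (simp add: mult_mono)
    have upper: "gcos t $ k \<le> gmax" for k
    proof -
      have "gam$k * cos (\<eta> t$k) \<le> gam$k * 1"
        using gam by (intro mult_left_mono) (auto simp: less_imp_le)
      then show ?thesis using gmax_ge[of k] by (simp add: gcos_def)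
    qed
    have nonneg: "gcos t $ k \<ge> 0" for k
      using lower[of k] gmin_pos cos_window_pos by (meson less_imp_le mult_pos_pos order.trans)
    define v where "v = transpose (BG B) *v \<omega> t"
    have "norm v \<le> K * (norm \<omega>b + E)"
    proof -
      have "norm v \<le> K * norm (\<omega> t)" using K by (simp add: v_def del: transpose_matrix_vector)
      also have "norm (\<omega> t) \<le> norm \<omega>b + E"
        using E t norm_triangle_ineq[of "omega_err t" \<omega>b] by (force simp: omega_err_def)
      finally show ?thesis using K by (simp add: mult_left_mono)
    qed
    have "gmin * cos window * (norm (eta_rate t))^2 \<le> eta_rate t \<bullet> (diagm (gcos t) *v eta_rate t)"
      using lower gmin_pos cos_window_pos by (intro inner_diagm_self_ge) auto
    also have "\<dots> \<le> v \<bullet> (diagm (gcos t) *v v)"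
      using r.transpose_reduced_energy_le[OF nonneg, of "\<omega> t"]
      unfolding eta_rate_def BS_gcos v_def .
    also have "\<dots> \<le> gmax * (norm v)^2" using upper by (rule inner_diagm_self_le)
    also have "\<dots> \<le> gmax * (K * (norm \<omega>b + E))^2"
      using \<open>norm v \<le> _\<close> gmin_pos gmin_le[of undefined] gmax_ge[of undefined]
      by (intro mult_left_mono power_mono) auto
    finally have "(norm (eta_rate t))^2 \<le> Q"
      unfolding Q_def using gmin_pos cos_window_pos by (simp add: field_simps)
    then show ?thesis by (rule real_le_rsqrt)
  qed
  then show ?thesis by blast
qed

text \<open>\<open>V\<close> has a limit, so it drops by arbitrarily little on late intervals; but while
  \<open>\<omega>\<close> is far from \<open>\<omega>b\<close> it stays far for a fixed time, forcing a fixed drop.\<close>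

lemma omega_err_eventually_small: "\<kappa> > 0 \<Longrightarrow> \<exists>T\<ge>0. \<forall>t\<ge>T. norm (omega_err t) < \<kappa>"
proof -
  assume k: "\<kappa> > 0"
  obtain LW where LW: "LW > 0" "\<forall>t\<ge>0. norm (omega_rate t) \<le> LW"
    using ex_pos_norm_bound omega_rate_bounded by blast
  define h where "h = \<kappa> / (2 * LW)"
  have h: "h > 0" using k LW by (simp add: h_def)
  define c where "c = amin * (\<kappa>/2)^2 * h"
  have c: "c > 0" using amin_pos k h by (simp add: c_def)
  obtain T where T: "T \<ge> 0" "\<forall>t\<ge>T. \<forall>h\<ge>0. V t - V (t + h) < c"
    using antimono_nonneg_eventually_small_decrease[of V c] V_antimono V_nonneg c by blast
  have "norm (omega_err t) < \<kappa>" if t: "t \<ge> T" for t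
  proof (rule ccontr)
    assume "\<not> norm (omega_err t) < \<kappa>"
    then have big: "norm (omega_err t) \<ge> \<kappa>" by simp
    have t0: "t \<ge> 0" using t T by simp
    have "V (t + h) - V t \<le> (- (amin * (\<kappa>/2)^2)) * (t + h - t)"
    proof (rule real_derivative_upper_bound[OF V_deriv])
      fix \<tau> assume \<tau>: "t \<le> \<tau>" "\<tau> \<le> t + h"
      have "norm (\<omega> \<tau> - \<omega> t) \<le> LW * (\<tau> - t)"
        using vector_derivative_norm_bound[OF omega_rate(1), of t \<tau> LW] LW \<tau> t0 by auto
      also have "\<dots> \<le> LW * h" using \<tau> LW by (intro mult_left_mono) auto
      also have "\<dots> = \<kappa>/2" using LW by (simp add: h_def)
      finally have "norm (omega_err \<tau> - omega_err t) \<le> \<kappa>/2" by (simp add: omega_err_def)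
      then have "norm (omega_err \<tau>) \<ge> \<kappa>/2"
        using big norm_triangle_ineq2[of "omega_err t" "omega_err \<tau>"] by (simp add: norm_minus_commute)
      then have "amin * (\<kappa>/2)^2 \<le> amin * (norm (omega_err \<tau>))^2"
        using k amin_pos by (intro mult_left_mono power_mono) auto
      also have "\<dots> \<le> omega_err \<tau> \<bullet> (diagm Av *v omega_err \<tau>)"
        using amin_le amin_pos by (intro inner_diagm_self_ge) (auto simp: less_imp_le)
      finally show "- (omega_err \<tau> \<bullet> (diagm Av *v omega_err \<tau>)) \<le> - (amin * (\<kappa>/2)^2)" by simp
    qed (use t0 h in auto)
    then have "V t - V (t + h) \<ge> c" by (simp add: c_def)
    moreover have "V t - V (t + h) < c" using T t h by auto
    ultimately show False by simp
  qed
  then show ?thesis using T by blast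
qed

lemma flow_err_lipschitz:
  assumes L: "\<forall>t\<ge>0. norm (eta_rate t) \<le> L" and K: "\<forall>x. norm ((BG B ** diagm gam) *v x) \<le> K * norm x"
    and K0: "K > 0" and t: "0 \<le> t" "t \<le> \<tau>"
  shows "norm (flow_err \<tau> - flow_err t) \<le> K * L * (\<tau> - t)"
proof -
  have "flow_err \<tau> - flow_err t = (BG B ** diagm gam) *v (vsin (\<eta> \<tau>) - vsin (\<eta> t))"
    by (simp add: flow_err_def sin_err_def matrix_vector_mul_assoc matrix_vector_mult_diff_distrib)
  then have "norm (flow_err \<tau> - flow_err t) \<le> K * norm (vsin (\<eta> \<tau>) - vsin (\<eta> t))" using K by simp
  also have "\<dots> \<le> K * norm (\<eta> \<tau> - \<eta> t)" using norm_vsin_diff_le K0 by (simp add: mult_left_mono)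
  also have "norm (\<eta> \<tau> - \<eta> t) \<le> L * (\<tau> - t)"
    using vector_derivative_norm_bound[OF eta_deriv, of t \<tau> L] L t by auto
  finally show ?thesis using K0 by (simp add: mult_left_mono mult.assoc)
qed

text \<open>As long as \<open>\<omega> - \<omega>b\<close> is small and the flow error \<open>P\<close> has barely moved, the
  \<open>\<omega>\<close>-equation pushes \<open>M \<omega>\<close> against \<open>P\<close> at rate at least \<open>\<bar>P\<bar>\<^sup>2/2\<close>.\<close>

lemma omega_rate_against_flow_err:
  assumes \<tau>: "\<tau> \<ge> 0" and KA: "\<forall>x. norm (diagm Av *v x) \<le> KA * norm x"
    and e: "KA * norm (omega_err \<tau>) \<le> norm P / 4" and p: "norm (flow_err \<tau> - P) \<le> norm P / 4"
  shows "omega_rate \<tau> \<bullet> (diagm Mv *v P) \<le> - ((norm P)^2 / 2)"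
proof -
  have split: "omega_rate \<tau> \<bullet> (diagm Mv *v P)
      = - ((diagm Av *v omega_err \<tau>) \<bullet> P) - (norm P)^2 - (flow_err \<tau> - P) \<bullet> P"
    using inner_diagm_commute[of "omega_rate \<tau>" Mv P] M_omega_rate[OF \<tau>]
    by (simp add: power2_norm_eq_inner inner_commute inner_diff_left inner_diff_right inner_minus_right)
  have "- ((diagm Av *v omega_err \<tau>) \<bullet> P) \<le> norm (diagm Av *v omega_err \<tau>) * norm P"
    using norm_cauchy_schwarz[of "- (diagm Av *v omega_err \<tau>)" P] by simp
  also have "\<dots> \<le> KA * norm (omega_err \<tau>) * norm P" using KA by (simp add: mult_right_mono)
  also have "\<dots> \<le> norm P / 4 * norm P" using e by (intro mult_right_mono) auto
  finally have damping: "- ((diagm Av *v omega_err \<tau>) \<bullet> P) \<le> (norm P)^2 / 4"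
    by (simp add: power2_eq_square)
  have "- ((flow_err \<tau> - P) \<bullet> P) \<le> norm (flow_err \<tau> - P) * norm P"
    using norm_cauchy_schwarz[of "- (flow_err \<tau> - P)" P] by (simp only: norm_minus_cancel inner_minus_left)
  also have "\<dots> \<le> norm P / 4 * norm P" using p by (intro mult_right_mono) auto
  finally have drift: "- ((flow_err \<tau> - P) \<bullet> P) \<le> (norm P)^2 / 4"
    by (simp add: power2_eq_square)
  show ?thesis using split damping drift by linarith
qed

lemma inner_omega_increment_ge:
  assumes s: "norm (omega_err s) < \<xi>" and t: "norm (omega_err t) < \<xi>"
    and KM: "\<forall>x. norm (diagm Mv *v x) \<le> KM * norm x"
  shows "(\<omega> s - \<omega> t) \<bullet> (diagm Mv *v P) \<ge> - (2 * \<xi> * (KM * norm P))"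
proof -
  have "norm (\<omega> s - \<omega> t) = norm (omega_err s - omega_err t)" by (simp add: omega_err_def)
  then have "norm (\<omega> s - \<omega> t) \<le> 2 * \<xi>"
    using s t norm_triangle_ineq4[of "omega_err s" "omega_err t"] by linarith
  moreover have "0 \<le> \<xi>" using s norm_ge_zero[of "omega_err s"] by linarith
  ultimately have "norm (\<omega> s - \<omega> t) * norm (diagm Mv *v P) \<le> 2 * \<xi> * (KM * norm P)"
    using KM by (intro mult_mono) auto
  then show ?thesis
    using Cauchy_Schwarz_ineq2[of "\<omega> s - \<omega> t" "diagm Mv *v P"] unfolding abs_le_iff by linarith
qed

lemma inner_omega_increment_le:
  assumes t: "t \<ge> 0" and h: "h \<ge> 0" and KA: "\<forall>x. norm (diagm Av *v x) \<le> KA * norm x"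
    and small: "\<And>\<tau>. t \<le> \<tau> \<Longrightarrow> \<tau> \<le> t + h \<Longrightarrow>
      KA * norm (omega_err \<tau>) \<le> norm (flow_err t) / 4 \<and> norm (flow_err \<tau> - flow_err t) \<le> norm (flow_err t) / 4"
  shows "(\<omega> (t + h) - \<omega> t) \<bullet> (diagm Mv *v flow_err t) \<le> - ((norm (flow_err t))^2 / 2) * h"
proof -
  define \<phi> where "\<phi> s = \<omega> s \<bullet> (diagm Mv *v flow_err t)" for s
  have \<phi>': "(\<phi> has_real_derivative (omega_rate s \<bullet> (diagm Mv *v flow_err t))) (at s within {0..})"
    if "s \<ge> 0" for s
    unfolding \<phi>_def has_real_derivative_iff_has_vector_derivative
    by (rule bounded_linear.has_vector_derivative[OF bounded_linear_inner_left omega_rate(1)[OF that]])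
  have "\<phi> (t + h) - \<phi> t \<le> - ((norm (flow_err t))^2 / 2) * (t + h - t)"
  proof (rule real_derivative_upper_bound[OF \<phi>'])
    fix \<tau> assume "t \<le> \<tau>" "\<tau> \<le> t + h"
    with t small show "omega_rate \<tau> \<bullet> (diagm Mv *v flow_err t) \<le> - ((norm (flow_err t))^2 / 2)"
      by (intro omega_rate_against_flow_err[OF _ KA]) auto
  qed (use t h in auto)
  then show ?thesis by (simp add: \<phi>_def inner_diff_left)
qed

lemma flow_err_eventually_small: "\<kappa> > 0 \<Longrightarrow> \<exists>T\<ge>0. \<forall>t\<ge>T. norm (flow_err t) < \<kappa>"
proof -
  assume k: "\<kappa> > 0"
  obtain L where L: "L > 0" "\<forall>t\<ge>0. norm (eta_rate t) \<le> L"
    using ex_pos_norm_bound eta_rate_bounded by blast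
  obtain K where K: "K > 0" "\<forall>x. norm ((BG B ** diagm gam) *v x) \<le> K * norm x"
    using matrix_vector_mult_bounded by blast
  obtain KA where KA: "KA > 0" "\<forall>x. norm (diagm Av *v x) \<le> KA * norm x"
    using matrix_vector_mult_bounded by blast
  obtain KM where KM: "KM > 0" "\<forall>x. norm (diagm Mv *v x) \<le> KM * norm x"
    using matrix_vector_mult_bounded by blast
  define h where "h = \<kappa> / (4 * K * L)"
  have h: "h > 0" using k K L by (simp add: h_def)
  define \<xi> where "\<xi> = min (\<kappa> / (4 * KA)) (\<kappa> * h / (8 * KM))"
  have \<xi>: "\<xi> > 0" using k KA KM h by (simp add: \<xi>_def)
  obtain T where T: "T \<ge> 0" "\<forall>t\<ge>T. norm (omega_err t) < \<xi>"
    using omega_err_eventually_small[OF \<xi>] by blast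
  have "norm (flow_err t) < \<kappa>" if t: "t \<ge> T" for t
  proof (rule ccontr)
    define P where "P = flow_err t"
    assume "\<not> norm (flow_err t) < \<kappa>"
    then have big: "\<kappa> \<le> norm P" by (simp add: P_def)
    have t0: "t \<ge> 0" using t T by simp
    have "(\<omega> (t + h) - \<omega> t) \<bullet> (diagm Mv *v P) \<le> - ((norm P)^2 / 2) * h"
      unfolding P_def
    proof (rule inner_omega_increment_le[OF t0 _ KA(2)])
      fix \<tau> assume \<tau>: "t \<le> \<tau>" "\<tau> \<le> t + h"
      have "norm (omega_err \<tau>) \<le> \<kappa> / (4 * KA)"
        using T \<tau> t min.cobounded1[of "\<kappa> / (4 * KA)"] unfolding \<xi>_def
        by (meson less_imp_le order_trans)
      then have "KA * norm (omega_err \<tau>) \<le> norm P / 4"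
        using KA big by (simp add: field_simps)
      moreover have "K * L * (\<tau> - t) \<le> K * L * h" using \<tau> K L by (intro mult_left_mono) auto
      then have "norm (flow_err \<tau> - P) \<le> norm P / 4"
        using flow_err_lipschitz[OF L(2) K(2) K(1) t0 \<tau>(1)] K L big by (simp add: P_def h_def)
      ultimately show "KA * norm (omega_err \<tau>) \<le> norm (flow_err t) / 4 \<and>
          norm (flow_err \<tau> - flow_err t) \<le> norm (flow_err t) / 4"
        by (simp add: P_def)
    qed (use h in auto)
    moreover have "(\<omega> (t + h) - \<omega> t) \<bullet> (diagm Mv *v P) \<ge> - (2 * \<xi> * (KM * norm P))"
      using inner_omega_increment_ge[OF _ _ KM(2)] T t h by simp
    ultimately have "(norm P * h / 2) * norm P \<le> (2 * \<xi> * KM) * norm P"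
      by (simp add: power2_eq_square mult_ac)
    moreover have "norm P > 0" using big k by linarith
    ultimately have "norm P * h / 2 \<le> 2 * \<xi> * KM"
      by (meson mult_right_le_imp_le)
    also have "2 * \<xi> * KM \<le> \<kappa> * h / 4"
    proof -
      have "\<xi> \<le> \<kappa> * h / (8 * KM)" by (simp add: \<xi>_def)
      then show ?thesis using KM by (simp add: field_simps)
    qed
    finally have "norm P \<le> \<kappa> / 2" using h by (simp add: field_simps)
    then show False using big k by linarith
  qed
  then show ?thesis using T by blast
qed

lemma sin_err_coercive:
  assumes t: "t \<ge> 0"
  shows "gmin * cos window * (norm (\<eta> t - \<eta>b))^2 \<le> (\<eta> t - \<eta>b) \<bullet> (diagm gam *v sin_err t)"
proof -
  define \<Delta> where "\<Delta> = \<eta> t - \<eta>b"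
  have "gmin * cos window * (norm \<Delta>)^2 = (\<Sum>k\<in>UNIV. gmin * (cos window * (\<Delta>$k)^2))"
    unfolding norm_power2_cart by (simp add: sum_distrib_left power2_eq_square mult_ac)
  also have "\<dots> \<le> (\<Sum>k\<in>UNIV. gam$k * (\<Delta>$k * (sin (\<eta> t$k) - sin (\<eta>b$k))))"
  proof (rule sum_mono)
    fix k
    have "\<bar>\<eta>b$k\<bar> \<le> window" using window_ge[of k] well_radius_bounds(1)[OF etab_bound[of k]] by linarith
    then have "cos window * (\<Delta>$k)^2 \<le> \<Delta>$k * (sin (\<eta> t$k) - sin (\<eta>b$k))"
      using sin_diff_mult_ge[OF window_lt eta_in_window[OF t]] by (simp add: \<Delta>_def)
    moreover have "0 \<le> cos window * (\<Delta>$k)^2" using cos_window_pos by simp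
    ultimately show "gmin * (cos window * (\<Delta>$k)^2) \<le> gam$k * (\<Delta>$k * (sin (\<eta> t$k) - sin (\<eta>b$k)))"
      using gmin_le[of k] gam by (simp add: mult_mono less_imp_le)
  qed
  also have "\<dots> = \<Delta> \<bullet> (diagm gam *v sin_err t)"
    by (simp add: sin_err_def inner_vec_def diagm_mult_vec_nth vsin_def mult_ac)
  finally show ?thesis by (simp add: \<Delta>_def)
qed

text \<open>Split \<open>\<Gamma> s = y + z\<close> with \<open>y \<in> ker B\<^sub>G \<inter> ker B\<^sub>L\<close> and \<open>z\<close> orthogonal to it: \<open>y\<close> is
  invisible to \<open>\<eta> - \<eta>b\<close>, and \<open>z\<close> is controlled by \<open>B\<^sub>G z = B\<^sub>G \<Gamma> s\<close> since \<open>B\<^sub>L z = 0\<close>.\<close>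

lemma eta_err_le_flow_err: "\<exists>e>0. \<forall>t\<ge>0. e * norm (\<eta> t - \<eta>b) \<le> norm (flow_err t)"
proof -
  obtain e where e: "e > 0" "\<forall>x\<in>orthogonal_comp {x. BGL x = 0}. e * norm x \<le> norm (BGL x)"
    using BGL_coercive by blast
  let ?K = "{x. BGL x = 0}"
  have "gmin * cos window * e * norm (\<eta> t - \<eta>b) \<le> norm (flow_err t)" if t: "t \<ge> 0" for t
  proof -
    define u where "u = diagm gam *v sin_err t"
    define \<Delta> where "\<Delta> = \<eta> t - \<eta>b"
    obtain y z where yz: "y \<in> span ?K" "\<And>w. w \<in> span ?K \<Longrightarrow> orthogonal z w" "u = y + z"
      using orthogonal_subspace_decomp_exists[of ?K u] by blast
    have y: "BGL y = 0" using yz(1) span_eq_iff[of ?K] subspace_ker_BGL by blast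
    have z: "z \<in> orthogonal_comp ?K"
      using yz(2) unfolding orthogonal_comp_def by (auto simp: orthogonal_commute intro: span_base)
    have "BGL u = (flow_err t, 0)" by (simp add: BGL_def u_def flow_err_def BL_sin_err[OF t])
    moreover have "BGL u = BGL y + BGL z"
      unfolding yz(3) by (rule linear_add[OF bounded_linear.linear[OF bounded_linear_BGL]])
    ultimately have "BGL z = (flow_err t, 0)" using y by simp
    then have "norm (BGL z) = norm (flow_err t)" by (simp add: norm_Pair)
    moreover have "e * norm z \<le> norm (BGL z)" using e(2) z by blast
    ultimately have ez: "e * norm z \<le> norm (flow_err t)" by simp
    have "gmin * cos window * (norm \<Delta>)^2 \<le> \<Delta> \<bullet> u"
      unfolding \<Delta>_def u_def by (rule sin_err_coercive[OF t])
    also have "\<Delta> \<bullet> u = \<Delta> \<bullet> z"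
      using eta_err_orthogonal_ker_BGL[OF y t]
      by (simp add: yz(3) inner_add_left inner_add_right \<Delta>_def inner_commute)
    also have "\<dots> \<le> norm \<Delta> * norm z" by (rule norm_cauchy_schwarz)
    finally have "(gmin * cos window * e * norm \<Delta>) * norm \<Delta> \<le> (e * norm z) * norm \<Delta>"
      using e(1) by (simp add: power2_eq_square mult_ac)
    also have "\<dots> \<le> norm (flow_err t) * norm \<Delta>" using ez by (simp add: mult_right_mono)
    finally have key: "(gmin * cos window * e * norm \<Delta>) * norm \<Delta> \<le> norm (flow_err t) * norm \<Delta>" .
    show ?thesis
    proof (cases "norm \<Delta> = 0")
      case False
      then have "norm \<Delta> > 0" by simp
      with key show ?thesis
        unfolding \<Delta>_def by (meson mult_right_le_imp_le)
    qed (simp add: \<Delta>_def)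
  qed
  moreover have "gmin * cos window * e > 0" using gmin_pos cos_window_pos e by simp
  ultimately show ?thesis by blast
qed

lemma eta_eventually_close: "\<kappa> > 0 \<Longrightarrow> \<exists>T\<ge>0. \<forall>t\<ge>T. norm (\<eta> t - \<eta>b) < \<kappa>"
proof -
  assume k: "\<kappa> > 0"
  obtain e where e: "e > 0" "\<forall>t\<ge>0. e * norm (\<eta> t - \<eta>b) \<le> norm (flow_err t)"
    using eta_err_le_flow_err by blast
  obtain T where T: "T \<ge> 0" "\<forall>t\<ge>T. norm (flow_err t) < e * \<kappa>"
    using flow_err_eventually_small[of "e * \<kappa>"] k e by auto
  have "e * norm (\<eta> t - \<eta>b) < e * \<kappa>" if "t \<ge> T" for t
    using e T that by (meson order.trans order_le_less_trans)
  then show ?thesis using T e(1) by auto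
qed

lemma trajectory_tendsto: "((\<lambda>t. (\<eta> t, \<omega> t)) \<longlongrightarrow> (\<eta>b, \<omega>b)) at_top"
proof (rule tendsto_Pair)
  show "(\<eta> \<longlongrightarrow> \<eta>b) at_top"
    unfolding tendsto_iff eventually_at_top_linorder dist_norm
    using eta_eventually_close by (meson order.trans)
  show "(\<omega> \<longlongrightarrow> \<omega>b) at_top"
    unfolding tendsto_iff eventually_at_top_linorder dist_norm
    using omega_err_eventually_small by (simp add: omega_err_def) (meson order.trans)
qed

end

theorem theorem2:
  fixes B :: "real^'e^('g::finite + 'l::finite)"
    and gam :: "real^'e" and Mv Av :: "real^'g"
    and ub :: "real^'g" and \<eta>b :: "real^'e" and \<omega>b :: "real^'g"
  assumes "incidence_matrix B" and "connected_incidence B"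
    and "\<forall>k. gam $ k > 0" and "\<forall>i. Mv $ i > 0" and "\<forall>i. Av $ i > 0"
    and "\<eta>b \<in> Omega" and "\<eta>b \<in> imBT B"
    and "is_equilibrium B gam Mv Av ub \<eta>b \<omega>b"
  shows "\<exists>\<epsilon>>0. \<forall>\<eta> \<omega>.
           is_solution B gam Mv Av ub \<eta> \<omega> \<and> \<eta> 0 \<in> imBT B
           \<and> BL B *v (diagm gam *v vsin (\<eta> 0)) = BL B *v (diagm gam *v vsin \<eta>b)
           \<and> dist (\<eta> 0) \<eta>b < \<epsilon> \<and> dist (\<omega> 0) \<omega>b < \<epsilon>
           \<longrightarrow> ((\<lambda>t. (\<eta> t, \<omega> t)) \<longlongrightarrow> (\<eta>b, \<omega>b)) at_top"
proof -
  interpret grid_equilibrium B gam Mv Av ub \<eta>b \<omega>b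
    using assms by unfold_locales
  obtain \<epsilon> where \<epsilon>: "\<epsilon> > 0" "\<forall>x w. dist x \<eta>b < \<epsilon> \<and> dist w \<omega>b < \<epsilon> \<longrightarrow> lyap x w < depth"
    using lyap_less_depth_near_equilibrium by blast
  have "((\<lambda>t. (\<eta> t, \<omega> t)) \<longlongrightarrow> (\<eta>b, \<omega>b)) at_top"
    if "is_solution B gam Mv Av ub \<eta> \<omega>" "\<eta> 0 \<in> imBT B"
      "BL B *v (diagm gam *v vsin (\<eta> 0)) = BL B *v (diagm gam *v vsin \<eta>b)"
      "dist (\<eta> 0) \<eta>b < \<epsilon>" "dist (\<omega> 0) \<omega>b < \<epsilon>" for \<eta> \<omega>
  proof -
    interpret grid_trajectory B gam Mv Av ub \<eta>b \<omega>b \<eta> \<omega>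
      using that by unfold_locales
    interpret grid_trajectory_in_well B gam Mv Av ub \<eta>b \<omega>b \<eta> \<omega>
      using \<epsilon>(2) that(4,5) by unfold_locales (simp add: V_def)
    show ?thesis by (rule trajectory_tendsto)
  qed
  with \<epsilon>(1) show ?thesis by blast
qed

end
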